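(* Let $\widehat{X}=X+\epsilon X_0$ and $\widehat{Y}=Y+\epsilon Y_0$ be dual matrices such that the dual group generalized inverse of $\widehat{X}$ exists. Then $\widehat{X}\leq_{D}^{\#}\widehat{Y}$ if and only if $X\leq^{\#}Y$, $\quad X^{\#}X_0+RX= X^{\#}Y_0+RY$, $\quad XR+X_0X^{\#}= YR+Y_0X^{\#}$, where $R=-X^{\#}X_0X^{\#}+(X^{\#})^2X_0(I-XX^{\#})+(I-XX^{\#})X_0(X^{\#})^2$.
   Context: Dual matrices have the form $X+\epsilon X_0$ with real square matrices $X,X_0$ and dual unit $\epsilon\neq0$, $\epsilon^2=0$. For a dual matrix $\widehat{X}$ of dual index 1, the dual group generalized inverse $\widehat{X}^{\#}$ is the unique dual matrix $\widehat{Z}$ (if it exists) with $\widehat{X}\widehat{Z}\widehat{X}=\widehat{X}$, $\widehat{Z}\widehat{X}\widehat{Z}=\widehat{Z}$, $\widehat{X}\widehat{Z}=\widehat{Z}\widehat{X}$; when it exists, $\widehat{X}^{\#}=X^{\#}+\epsilon R$ with $R$ as in the claim, where $X^{\#}$ is the group inverse of $X$. The D-group order is defined by $\widehat{X}\leq_{D}^{\#}\widehat{Y}$ iff $\widehat{X}^{\#}\widehat{X}=\widehat{X}^{\#}\widehat{Y}$ and $\widehat{X}\widehat{X}^{\#}=\widehat{Y}\widehat{X}^{\#}$. For real matrices, the group partial order $X\leq^{\#}Y$ means $X^{\#}X=X^{\#}Y$ and $XX^{\#}=YX^{\#}$. *)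

theory Defs
  imports "HOL-Analysis.Analysis"
begin

text \<open>Dual matrices X + eps X0 (n x n real) represented as pairs (X, X0).\<close>
type_synonym 'n dmat = "(real^'n^'n) \<times> (real^'n^'n)"

definition dmult :: "'n::finite dmat \<Rightarrow> 'n dmat \<Rightarrow> 'n dmat" (infixl "**\<^sub>D" 70) where
  "dmult A B = (fst A ** fst B, fst A ** snd B + snd A ** fst B)"

definition is_group_inverse :: "real^'n^'n \<Rightarrow> real^'n^'n \<Rightarrow> bool" where
  "is_group_inverse X Z \<longleftrightarrow> X ** Z ** X = X \<and> Z ** X ** Z = Z \<and> X ** Z = Z ** X"

definition group_inv :: "real^'n^'n \<Rightarrow> real^'n^'n" where
  "group_inv X = (THE Z. is_group_inverse X Z)"

definition group_le :: "real^'n^'n \<Rightarrow> real^'n^'n \<Rightarrow> bool" where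
  "group_le X Y \<longleftrightarrow> group_inv X ** X = group_inv X ** Y \<and> X ** group_inv X = Y ** group_inv X"

definition is_dual_group_inverse :: "'n::finite dmat \<Rightarrow> 'n dmat \<Rightarrow> bool" where
  "is_dual_group_inverse X Z \<longleftrightarrow>
     X **\<^sub>D Z **\<^sub>D X = X \<and> Z **\<^sub>D X **\<^sub>D Z = Z \<and> X **\<^sub>D Z = Z **\<^sub>D X"

definition dual_group_inv :: "'n::finite dmat \<Rightarrow> 'n dmat" where
  "dual_group_inv X = (THE Z. is_dual_group_inverse X Z)"

definition dgroup_le :: "'n::finite dmat \<Rightarrow> 'n dmat \<Rightarrow> bool" where
  "dgroup_le X Y \<longleftrightarrow>
     dual_group_inv X **\<^sub>D X = dual_group_inv X **\<^sub>D Y \<and>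
     X **\<^sub>D dual_group_inv X = Y **\<^sub>D dual_group_inv X"

end

theory Submission
  imports Defs
begin

text \<open>Uniqueness of a group inverse only uses associativity, so it holds for real and for
dual matrices alike, and the real part of \<open>(X, X\<^sub>0)\<^sup>#\<close> is \<open>X\<^sup>#\<close>. With \<open>P = X X\<^sup>#\<close>,
the dual part of \<open>Z X Z = Z\<close> reads \<open>Z\<^sub>0 = P Z\<^sub>0 + X\<^sup># X\<^sub>0 X\<^sup># + Z\<^sub>0 P\<close>. Compressing it
by \<open>P\<close> gives \<open>P Z\<^sub>0 P = - X\<^sup># X\<^sub>0 X\<^sup>#\<close>, and multiplying the dual part of the commutation
equation by \<open>X\<^sup>#\<close> on either side then determines \<open>P Z\<^sub>0\<close> and \<open>Z\<^sub>0 P\<close>, whence \<open>Z\<^sub>0 = R\<close>.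
The two equations of the D-group order then split into their real and dual parts, which
are the three stated conditions.\<close>

lemma matrix_add_rdistrib: "(A + B) ** C = A ** C + B ** C"
  for A B :: "'a::semiring_1^'n^'m" and C :: "'a^'p^'n"
  by (simp add: matrix_matrix_mult_def vec_eq_iff sum.distrib distrib_right)

lemma matrix_diff_ldistrib: "A ** (B - C) = A ** B - A ** C"
  for A :: "'a::ring_1^'n^'m" and B C :: "'a^'p^'n"
  by (simp add: matrix_matrix_mult_def vec_eq_iff sum_subtractf right_diff_distrib)

lemma matrix_diff_rdistrib: "(A - B) ** C = A ** C - B ** C"
  for A B :: "'a::ring_1^'n^'m" and C :: "'a^'p^'n"
  by (simp add: matrix_matrix_mult_def vec_eq_iff sum_subtractf left_diff_distrib)

lemma matrix_mul_minus_left: "(- A) ** B = - (A ** B)"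
  for A :: "'a::ring_1^'n^'m" and B :: "'a^'p^'n"
  by (simp add: matrix_matrix_mult_def vec_eq_iff sum_negf)

lemma matrix_mul_minus_right: "A ** (- B) = - (A ** B)"
  for A :: "'a::ring_1^'n^'m" and B :: "'a^'p^'n"
  by (simp add: matrix_matrix_mult_def vec_eq_iff sum_negf)

lemmas matrix_ring_simps = matrix_add_ldistrib matrix_add_rdistrib matrix_diff_ldistrib
  matrix_diff_rdistrib matrix_mul_minus_left matrix_mul_minus_right matrix_mul_assoc

lemma (in semigroup) group_inverse_unique:
  assumes z: "x \<^bold>* z \<^bold>* x = x" "z \<^bold>* x \<^bold>* z = z" "x \<^bold>* z = z \<^bold>* x"
    and w: "x \<^bold>* w \<^bold>* x = x" "w \<^bold>* x \<^bold>* w = w" "x \<^bold>* w = w \<^bold>* x"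
  shows "z = w"
proof -
  have "x \<^bold>* z = x \<^bold>* w \<^bold>* x \<^bold>* z"
    using w(1) by simp
  also have "\<dots> = x \<^bold>* w"
    using z(1) z(3) w(3) by (metis assoc)
  finally have xz_xw: "x \<^bold>* z = x \<^bold>* w" .
  have "z = w \<^bold>* x \<^bold>* z"
    using z(2) z(3) xz_xw w(3) by (metis assoc)
  also have "\<dots> = w"
    using xz_xw w(2) by (metis assoc)
  finally show ?thesis .
qed

lemma semigroup_matrix_mult: "semigroup ((**) :: 'a::semiring_1^'n^'n \<Rightarrow> _ \<Rightarrow> _)"
  by unfold_locales (simp add: matrix_mul_assoc)

lemma semigroup_dmult: "semigroup dmult"
  by unfold_locales
    (simp add: dmult_def matrix_ring_simps add.assoc)

lemma group_inv_eqI: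
  assumes "is_group_inverse X G"
  shows "group_inv X = G"
  unfolding group_inv_def
proof (rule the_equality)
  fix W
  assume "is_group_inverse X W"
  with assms show "W = G"
    using semigroup.group_inverse_unique[OF semigroup_matrix_mult]
    unfolding is_group_inverse_def by blast
qed (fact assms)

lemma dual_group_inv_eqI:
  assumes "is_dual_group_inverse X Z"
  shows "dual_group_inv X = Z"
  unfolding dual_group_inv_def
proof (rule the_equality)
  fix W
  assume "is_dual_group_inverse X W"
  with assms show "W = Z"
    using semigroup.group_inverse_unique[OF semigroup_dmult]
    unfolding is_dual_group_inverse_def by blast
qed (fact assms)

lemma is_dual_group_inverseD:
  assumes "is_dual_group_inverse (X, X0) (G, Z0)"
  shows "is_group_inverse X G"
    and "G ** X ** Z0 + (G ** X0 + Z0 ** X) ** G = Z0"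
    and "X ** Z0 + X0 ** G = G ** X0 + Z0 ** X"
  using assms unfolding is_dual_group_inverse_def is_group_inverse_def dmult_def
    fst_conv snd_conv prod.inject
  by blast+

lemma dual_group_inverse_dual_part:
  fixes X G X0 Z0 :: "real^'n^'n"
  assumes "is_group_inverse X G"
    and ZXZ: "G ** X ** Z0 + (G ** X0 + Z0 ** X) ** G = Z0"
    and comm: "X ** Z0 + X0 ** G = G ** X0 + Z0 ** X"
  shows "Z0 = - (G ** X0 ** G) + (G ** G) ** X0 ** (mat 1 - X ** G)
                + (mat 1 - X ** G) ** X0 ** (G ** G)"
proof -
  define P where "P = X ** G"
  from assms(1) have XGX: "X ** G ** X = X" and GXG: "G ** X ** G = G" and GX: "G ** X = P"
    by (auto simp: is_group_inverse_def P_def)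
  have P0: "P ** X = X" "X ** P = X" "P ** G = G" "G ** P = G" "P ** P = P"
    using XGX GXG GX by (metis P_def matrix_mul_assoc)+
  \<comment> \<open>left-nested variants, so that they rewrite inside left-associated products\<close>
  then have "A ** P ** P = A ** P" "A ** P ** X = A ** X" "A ** X ** P = A ** X"
      "A ** P ** G = A ** G" "A ** G ** P = A ** G" "A ** G ** X = A ** P" "A ** X ** G = A ** P" for A
    using GX by (simp_all add: P_def flip: matrix_mul_assoc)
  note P = P0 GX P_def[symmetric] this
  have Z0_decomp: "Z0 = P ** Z0 + G ** X0 ** G + Z0 ** P"
    using ZXZ by (simp add: matrix_ring_simps GX P add.assoc)
  have "P ** Z0 ** P = P ** (P ** Z0 + G ** X0 ** G + Z0 ** P) ** P"
    using Z0_decomp by simp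
  also have "\<dots> = P ** Z0 ** P + G ** X0 ** G + P ** Z0 ** P"
    by (simp add: matrix_ring_simps P)
  finally have sandwich: "P ** Z0 ** P = - (G ** X0 ** G)"
    by (simp add: eq_neg_iff_add_eq_0)
  have "G ** Z0 ** X = G ** (P ** Z0 ** P) ** X"
    by (simp add: matrix_ring_simps P)
  then have GZX: "G ** Z0 ** X = - (G ** G ** X0 ** P)"
    by (simp add: sandwich matrix_ring_simps P)
  have "X ** Z0 ** G = X ** (P ** Z0 ** P) ** G"
    by (simp add: matrix_ring_simps P)
  then have XZG: "X ** Z0 ** G = - (P ** X0 ** G ** G)"
    by (simp add: sandwich matrix_ring_simps P)
  from comm have "G ** (X ** Z0 + X0 ** G) = G ** (G ** X0 + Z0 ** X)"
    by simp
  then have "P ** Z0 + G ** X0 ** G = G ** G ** X0 + G ** Z0 ** X"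
    by (simp add: matrix_ring_simps P)
  then have left: "P ** Z0 = G ** G ** X0 ** (mat 1 - P) - G ** X0 ** G"
    by (simp add: GZX matrix_ring_simps algebra_simps)
  from comm have "(X ** Z0 + X0 ** G) ** G = (G ** X0 + Z0 ** X) ** G"
    by simp
  then have "X ** Z0 ** G + X0 ** G ** G = G ** X0 ** G + Z0 ** P"
    by (simp add: matrix_ring_simps P)
  then have right: "Z0 ** P = (mat 1 - P) ** X0 ** G ** G - G ** X0 ** G"
    by (simp add: XZG matrix_ring_simps algebra_simps)
  have "Z0 = - (G ** X0 ** G) + G ** G ** X0 ** (mat 1 - P) + (mat 1 - P) ** X0 ** G ** G"
    by (subst Z0_decomp) (simp add: left right algebra_simps)
  then show ?thesis
    by (simp add: P_def matrix_mul_assoc)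
qed

theorem mainTheorem12:
  fixes X X0 Y Y0 :: "real^'n^'n"
  assumes "\<exists>Z. is_dual_group_inverse (X, X0) Z"
  defines "Xg \<equiv> group_inv X"
  defines "R \<equiv> - (Xg ** X0 ** Xg) + (Xg ** Xg) ** X0 ** (mat 1 - X ** Xg)
                + (mat 1 - X ** Xg) ** X0 ** (Xg ** Xg)"
  shows "dgroup_le (X, X0) (Y, Y0) \<longleftrightarrow>
           group_le X Y \<and>
           Xg ** X0 + R ** X = Xg ** Y0 + R ** Y \<and>
           X ** R + X0 ** Xg = Y ** R + Y0 ** Xg"
proof -
  obtain G Z0 where Z: "is_dual_group_inverse (X, X0) (G, Z0)"
    using assms(1) by auto
  note parts = is_dual_group_inverseD[OF Z]
  have Xg: "Xg = G"
    unfolding Xg_def using parts(1) by (rule group_inv_eqI)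
  have "R = Z0"
    unfolding R_def Xg using dual_group_inverse_dual_part[OF parts] by simp
  with Xg have "dual_group_inv (X, X0) = (Xg, R)"
    using dual_group_inv_eqI[OF Z] by simp
  then show ?thesis
    unfolding dgroup_le_def group_le_def Xg_def[symmetric] by (auto simp: dmult_def)
qed

end
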